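(* Let $\mathbb C$ be a pointed category with finite limits and finite colimits, and let $w\colon W\to A$, $x\colon X\to A$, $y\colon Y\to A$ be morphisms in $\mathbb C$. If $p\colon A_3\to A$ is an internal pregroupoid structure on the span $A/X \leftarrow A \rightarrow A/Y$, then $p\gamma_w\colon (W+X)\times_W(W+Y)\to A$ is an internal multiplication $X\times Y\to A$ over $(W,w)$.
   Context: Notation: $\iota_1,\iota_2,\dots$ denote coproduct injections, $[a,b]$ (resp. $[a,b,c]$) the morphism out of a coproduct with components $a,b$ (resp. $a,b,c$), $\langle a,b\rangle$ the morphism into a (fibred) product with components $a,b$, and $1$, $0$ identity and zero morphisms. $(W+X)\times_W(W+Y)$ denotes the pullback of $[1,0]\colon W+X\to W$ and $[1,0]\colon W+Y\to W$, with projections $\pi_1,\pi_2$. An internal multiplication $X\times Y\to A$ over $(W,w)$ is a morphism $m\colon (W+X)\times_W(W+Y)\to A$ with $m\langle 1,\iota_1[1,0]\rangle=[w,x]\colon W+X\to A$ and $m\langle \iota_1[1,0],1\rangle=[w,y]\colon W+Y\to A$. $A/X$ and $A/Y$ denote the codomains of $\mathsf{coker}(x)$ and $\mathsf{coker}(y)$, and $A_3=A\times_{A/X}A\times_{A/Y}A$ is the limit of $A\xrightarrow{\mathsf{coker}(x)}A/X\xleftarrow{\mathsf{coker}(x)}A\xrightarrow{\mathsf{coker}(y)}A/Y\xleftarrow{\mathsf{coker}(y)}A$, with three projections to $A$. $\gamma_w\colon (W+X)\times_W(W+Y)\to A_3$ is the morphism $\langle [w,x]\pi_1,[w,0]\pi_1,[w,y]\pi_2\rangle$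 (note $[w,0]\pi_1=[w,0]\pi_2$). An internal pregroupoid structure on the span $A/X\leftarrow A\to A/Y$ (the two legs being $\mathsf{coker}(x)$ and $\mathsf{coker}(y)$) is a morphism $p\colon A_3\to A$ such that $p\langle\pi_1,\pi_2,\pi_2\rangle=\pi_1$ as morphisms $A\times_{A/X}A\to A$ and $p\langle \pi_1,\pi_1,\pi_2\rangle=\pi_2$ as morphisms $A\times_{A/Y}A\to A$, where $\pi_1,\pi_2$ denote the kernel-pair projections. *)

theory Defs
  imports Main
begin

record ('o, 'm) cat =
  Obj  :: "'o set"
  Arr  :: "'m set"
  Dom  :: "'m \<Rightarrow> 'o"
  Cod  :: "'m \<Rightarrow> 'o"
  Id   :: "'o \<Rightarrow> 'm"
  Comp :: "'m \<Rightarrow> 'm \<Rightarrow> 'm"   \<comment> \<open>Comp C g f = g \<circ> f\<close>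

definition hom :: "('o, 'm) cat \<Rightarrow> 'o \<Rightarrow> 'o \<Rightarrow> 'm \<Rightarrow> bool" where
  "hom C a b f \<longleftrightarrow> f \<in> Arr C \<and> Dom C f = a \<and> Cod C f = b"

definition category :: "('o, 'm) cat \<Rightarrow> bool" where
  "category C \<longleftrightarrow>
     (\<forall>f\<in>Arr C. Dom C f \<in> Obj C \<and> Cod C f \<in> Obj C) \<and>
     (\<forall>a\<in>Obj C. hom C a a (Id C a)) \<and>
     (\<forall>f\<in>Arr C. \<forall>g\<in>Arr C. Cod C f = Dom C g \<longrightarrow> hom C (Dom C f) (Cod C g) (Comp C g f)) \<and>
     (\<forall>f\<in>Arr C. Comp C (Id C (Cod C f)) f = f \<and> Comp C f (Id C (Dom C f)) = f) \<and>
     (\<forall>f\<in>Arr C. \<forall>g\<in>Arr C. \<forall>h\<in>Arr C. Cod C f = Dom C g \<longrightarrow> Cod C g = Dom C h \<longrightarrow>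
         Comp C h (Comp C g f) = Comp C (Comp C h g) f)"

definition is_initial :: "('o, 'm) cat \<Rightarrow> 'o \<Rightarrow> bool" where
  "is_initial C z \<longleftrightarrow> z \<in> Obj C \<and> (\<forall>b\<in>Obj C. \<exists>!f. hom C z b f)"

definition is_terminal :: "('o, 'm) cat \<Rightarrow> 'o \<Rightarrow> bool" where
  "is_terminal C z \<longleftrightarrow> z \<in> Obj C \<and> (\<forall>b\<in>Obj C. \<exists>!f. hom C b z f)"

definition is_zero_obj :: "('o, 'm) cat \<Rightarrow> 'o \<Rightarrow> bool" where
  "is_zero_obj C z \<longleftrightarrow> is_initial C z \<and> is_terminal C z"

definition pointed :: "('o, 'm) cat \<Rightarrow> bool" where
  "pointed C \<longleftrightarrow> (\<exists>z. is_zero_obj C z)"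

text \<open>The zero morphism a \<rightarrow> b (factoring through a zero object; independent of the choice).\<close>
definition zero_arr :: "('o, 'm) cat \<Rightarrow> 'o \<Rightarrow> 'o \<Rightarrow> 'm" where
  "zero_arr C a b = (let z = (SOME z. is_zero_obj C z) in
      Comp C (THE g. hom C z b g) (THE f. hom C a z f))"

definition is_product :: "('o, 'm) cat \<Rightarrow> 'o \<Rightarrow> 'o \<Rightarrow> 'o \<Rightarrow> 'm \<Rightarrow> 'm \<Rightarrow> bool" where
  "is_product C a b P p1 p2 \<longleftrightarrow> P \<in> Obj C \<and> hom C P a p1 \<and> hom C P b p2 \<and>
     (\<forall>T f g. hom C T a f \<longrightarrow> hom C T b g \<longrightarrow>
        (\<exists>!h. hom C T P h \<and> Comp C p1 h = f \<and> Comp C p2 h = g))"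

definition is_coproduct :: "('o, 'm) cat \<Rightarrow> 'o \<Rightarrow> 'o \<Rightarrow> 'o \<Rightarrow> 'm \<Rightarrow> 'm \<Rightarrow> bool" where
  "is_coproduct C a b S i1 i2 \<longleftrightarrow> S \<in> Obj C \<and> hom C a S i1 \<and> hom C b S i2 \<and>
     (\<forall>T f g. hom C a T f \<longrightarrow> hom C b T g \<longrightarrow>
        (\<exists>!h. hom C S T h \<and> Comp C h i1 = f \<and> Comp C h i2 = g))"

definition is_equalizer :: "('o, 'm) cat \<Rightarrow> 'm \<Rightarrow> 'm \<Rightarrow> 'o \<Rightarrow> 'm \<Rightarrow> bool" where
  "is_equalizer C f g E e \<longleftrightarrow> E \<in> Obj C \<and> hom C E (Dom C f) e \<and>
     Comp C f e = Comp C g e \<and>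
     (\<forall>T k. hom C T (Dom C f) k \<longrightarrow> Comp C f k = Comp C g k \<longrightarrow>
        (\<exists>!h. hom C T E h \<and> Comp C e h = k))"

definition is_coequalizer :: "('o, 'm) cat \<Rightarrow> 'm \<Rightarrow> 'm \<Rightarrow> 'o \<Rightarrow> 'm \<Rightarrow> bool" where
  "is_coequalizer C f g Q q \<longleftrightarrow> Q \<in> Obj C \<and> hom C (Cod C f) Q q \<and>
     Comp C q f = Comp C q g \<and>
     (\<forall>T k. hom C (Cod C f) T k \<longrightarrow> Comp C k f = Comp C k g \<longrightarrow>
        (\<exists>!h. hom C Q T h \<and> Comp C h q = k))"

definition has_finite_limits :: "('o, 'm) cat \<Rightarrow> bool" where
  "has_finite_limits C \<longleftrightarrow> (\<exists>t. is_terminal C t) \<and>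
     (\<forall>a\<in>Obj C. \<forall>b\<in>Obj C. \<exists>P p1 p2. is_product C a b P p1 p2) \<and>
     (\<forall>f g. f \<in> Arr C \<longrightarrow> g \<in> Arr C \<longrightarrow> Dom C f = Dom C g \<longrightarrow> Cod C f = Cod C g \<longrightarrow>
        (\<exists>E e. is_equalizer C f g E e))"

definition has_finite_colimits :: "('o, 'm) cat \<Rightarrow> bool" where
  "has_finite_colimits C \<longleftrightarrow> (\<exists>t. is_initial C t) \<and>
     (\<forall>a\<in>Obj C. \<forall>b\<in>Obj C. \<exists>S i1 i2. is_coproduct C a b S i1 i2) \<and>
     (\<forall>f g. f \<in> Arr C \<longrightarrow> g \<in> Arr C \<longrightarrow> Dom C f = Dom C g \<longrightarrow> Cod C f = Cod C g \<longrightarrow>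
        (\<exists>Q q. is_coequalizer C f g Q q))"

definition is_pullback :: "('o, 'm) cat \<Rightarrow> 'm \<Rightarrow> 'm \<Rightarrow> 'o \<Rightarrow> 'm \<Rightarrow> 'm \<Rightarrow> bool" where
  "is_pullback C f g P p1 p2 \<longleftrightarrow> f \<in> Arr C \<and> g \<in> Arr C \<and> Cod C f = Cod C g \<and>
     P \<in> Obj C \<and> hom C P (Dom C f) p1 \<and> hom C P (Dom C g) p2 \<and>
     Comp C f p1 = Comp C g p2 \<and>
     (\<forall>T a b. hom C T (Dom C f) a \<longrightarrow> hom C T (Dom C g) b \<longrightarrow> Comp C f a = Comp C g b \<longrightarrow>
        (\<exists>!h. hom C T P h \<and> Comp C p1 h = a \<and> Comp C p2 h = b))"

definition is_cokernel :: "('o, 'm) cat \<Rightarrow> 'm \<Rightarrow> 'o \<Rightarrow> 'm \<Rightarrow> bool" where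
  "is_cokernel C x Q q \<longleftrightarrow> x \<in> Arr C \<and> Q \<in> Obj C \<and> hom C (Cod C x) Q q \<and>
     Comp C q x = zero_arr C (Dom C x) Q \<and>
     (\<forall>T f. hom C (Cod C x) T f \<longrightarrow> Comp C f x = zero_arr C (Dom C x) T \<longrightarrow>
        (\<exists>!h. hom C Q T h \<and> Comp C h q = f))"

text \<open>Limit A_3 of  A --qx--> A/X <--qx-- A --qy--> A/Y <--qy-- A, projections l1, l2, l3.\<close>
definition is_A3 :: "('o, 'm) cat \<Rightarrow> 'm \<Rightarrow> 'm \<Rightarrow> 'o \<Rightarrow> 'm \<Rightarrow> 'm \<Rightarrow> 'm \<Rightarrow> bool" where
  "is_A3 C qx qy L l1 l2 l3 \<longleftrightarrow> qx \<in> Arr C \<and> qy \<in> Arr C \<and> Dom C qx = Dom C qy \<and>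
     L \<in> Obj C \<and> hom C L (Dom C qx) l1 \<and> hom C L (Dom C qx) l2 \<and> hom C L (Dom C qx) l3 \<and>
     Comp C qx l1 = Comp C qx l2 \<and> Comp C qy l2 = Comp C qy l3 \<and>
     (\<forall>T a b c. hom C T (Dom C qx) a \<longrightarrow> hom C T (Dom C qx) b \<longrightarrow> hom C T (Dom C qx) c \<longrightarrow>
        Comp C qx a = Comp C qx b \<longrightarrow> Comp C qy b = Comp C qy c \<longrightarrow>
        (\<exists>!h. hom C T L h \<and> Comp C l1 h = a \<and> Comp C l2 h = b \<and> Comp C l3 h = c))"

definition copair :: "('o, 'm) cat \<Rightarrow> 'o \<Rightarrow> 'm \<Rightarrow> 'm \<Rightarrow> 'm \<Rightarrow> 'm \<Rightarrow> 'm" where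
  "copair C S i1 i2 f g = (THE h. hom C S (Cod C f) h \<and> Comp C h i1 = f \<and> Comp C h i2 = g)"

definition pbpair :: "('o, 'm) cat \<Rightarrow> 'o \<Rightarrow> 'm \<Rightarrow> 'm \<Rightarrow> 'm \<Rightarrow> 'm \<Rightarrow> 'm" where
  "pbpair C P p1 p2 a b = (THE h. hom C (Dom C a) P h \<and> Comp C p1 h = a \<and> Comp C p2 h = b)"

definition triple :: "('o, 'm) cat \<Rightarrow> 'o \<Rightarrow> 'm \<Rightarrow> 'm \<Rightarrow> 'm \<Rightarrow> 'm \<Rightarrow> 'm \<Rightarrow> 'm \<Rightarrow> 'm" where
  "triple C L l1 l2 l3 a b c = (THE h. hom C (Dom C a) L h \<and>
      Comp C l1 h = a \<and> Comp C l2 h = b \<and> Comp C l3 h = c)"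

text \<open>Internal multiplication X \<times> Y \<rightarrow> A over (W,w): m : (W+X)\<times>_W(W+Y) \<rightarrow> A, where
  (SX,i1,i2) = W+X, (SY,j1,j2) = W+Y and (P,pi1,pi2) is the pullback of [1,0] and [1,0].\<close>
definition internal_mult ::
  "('o, 'm) cat \<Rightarrow> 'm \<Rightarrow> 'm \<Rightarrow> 'm \<Rightarrow> 'o \<Rightarrow> 'm \<Rightarrow> 'm \<Rightarrow> 'o \<Rightarrow> 'm \<Rightarrow> 'm \<Rightarrow> 'o \<Rightarrow> 'm \<Rightarrow> 'm \<Rightarrow> 'm \<Rightarrow> bool"
where
  "internal_mult C w x y SX i1 i2 SY j1 j2 P pi1 pi2 m \<longleftrightarrow>
     hom C P (Cod C w) m \<and>
     Comp C m (pbpair C P pi1 pi2 (Id C SX)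
                 (Comp C j1 (copair C SX i1 i2 (Id C (Dom C w)) (zero_arr C (Dom C x) (Dom C w)))))
       = copair C SX i1 i2 w x \<and>
     Comp C m (pbpair C P pi1 pi2
                 (Comp C i1 (copair C SY j1 j2 (Id C (Dom C w)) (zero_arr C (Dom C y) (Dom C w))))
                 (Id C SY))
       = copair C SY j1 j2 w y"

text \<open>Internal pregroupoid structure p : A_3 \<rightarrow> A on the span A/X \<leftarrow> A \<rightarrow> A/Y; (KX,k1,k2) and
  (KY,r1,r2) are the kernel pairs of qx = coker x and qy = coker y.\<close>
definition pregroupoid_structure ::
  "('o, 'm) cat \<Rightarrow> 'o \<Rightarrow> 'm \<Rightarrow> 'm \<Rightarrow> 'm \<Rightarrow> 'm \<Rightarrow> 'm \<Rightarrow> 'm \<Rightarrow> 'm \<Rightarrow> 'm \<Rightarrow> bool"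
where
  "pregroupoid_structure C L l1 l2 l3 k1 k2 r1 r2 p \<longleftrightarrow>
     hom C L (Cod C l1) p \<and>
     Comp C p (triple C L l1 l2 l3 k1 k2 k2) = k1 \<and>
     Comp C p (triple C L l1 l2 l3 r1 r1 r2) = r2"

definition gamma ::
  "('o, 'm) cat \<Rightarrow> 'm \<Rightarrow> 'm \<Rightarrow> 'm \<Rightarrow> 'o \<Rightarrow> 'm \<Rightarrow> 'm \<Rightarrow> 'o \<Rightarrow> 'm \<Rightarrow> 'm \<Rightarrow> 'm \<Rightarrow> 'm
     \<Rightarrow> 'o \<Rightarrow> 'm \<Rightarrow> 'm \<Rightarrow> 'm \<Rightarrow> 'm"
where
  "gamma C w x y SX i1 i2 SY j1 j2 pi1 pi2 L l1 l2 l3 =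
     triple C L l1 l2 l3
       (Comp C (copair C SX i1 i2 w x) pi1)
       (Comp C (copair C SX i1 i2 w (zero_arr C (Dom C x) (Cod C w))) pi1)
       (Comp C (copair C SY j1 j2 w y) pi2)"

end

theory Submission
  imports Defs
begin

text \<open>Precomposed with the section \<open>\<langle>1, \<iota>\<^sub>1[1,0]\<rangle>\<close> of \<open>\<pi>\<^sub>1\<close>, the morphism
  \<open>\<gamma>\<^sub>w\<close> becomes \<open>\<langle>[w,x], [w,0], [w,0]\<rangle>\<close>. Since \<open>coker(x)\<close> identifies
  \<open>[w,x]\<close> and \<open>[w,0]\<close>, this triple factors as \<open>\<langle>k\<^sub>1,k\<^sub>2,k\<^sub>2\<rangle>\<close> through the
  kernel pair of \<open>coker(x)\<close>, on which \<open>p\<close> is the first projection; so \<open>p\<gamma>\<^sub>w\<close>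
  restricts to \<open>[w,x]\<close>. Symmetrically, along \<open>\<langle>\<iota>\<^sub>1[1,0], 1\<rangle>\<close> one gets
  \<open>\<langle>[w,0], [w,0], [w,y]\<rangle>\<close>, which factors through the kernel pair of \<open>coker(y)\<close>,
  where \<open>p\<close> is the last projection.\<close>

lemma
  assumes "is_coproduct C a b S i1 i2" "hom C a T f" "hom C b T g"
  shows copair_hom: "hom C S T (copair C S i1 i2 f g)"
    and copair_in1: "Comp C (copair C S i1 i2 f g) i1 = f"
    and copair_in2: "Comp C (copair C S i1 i2 f g) i2 = g"
proof -
  have "\<exists>!h. hom C S T h \<and> Comp C h i1 = f \<and> Comp C h i2 = g"
    using assms unfolding is_coproduct_def by blast
  moreover have "Cod C f = T" using assms(2) by (simp add: hom_def)
  ultimately show "hom C S T (copair C S i1 i2 f g)" "Comp C (copair C S i1 i2 f g) i1 = f"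
    "Comp C (copair C S i1 i2 f g) i2 = g"
    unfolding copair_def by (auto dest!: theI')
qed

lemma copair_unique:
  assumes "is_coproduct C a b S i1 i2" "hom C a T f" "hom C b T g"
    and "hom C S T h" "Comp C h i1 = f" "Comp C h i2 = g"
  shows "copair C S i1 i2 f g = h"
proof -
  have "\<exists>!h. hom C S T h \<and> Comp C h i1 = f \<and> Comp C h i2 = g"
    using assms(1-3) unfolding is_coproduct_def by blast
  moreover have "Cod C f = T" using assms(2) by (simp add: hom_def)
  ultimately show ?thesis
    unfolding copair_def using assms(4-6) by (auto intro: the1_equality)
qed

lemma
  assumes "is_pullback C f g P p1 p2" "hom C T (Dom C f) a" "hom C T (Dom C g) b"
    and "Comp C f a = Comp C g b"
  shows pbpair_hom: "hom C T P (pbpair C P p1 p2 a b)"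
    and pbpair_proj1: "Comp C p1 (pbpair C P p1 p2 a b) = a"
    and pbpair_proj2: "Comp C p2 (pbpair C P p1 p2 a b) = b"
proof -
  have "\<exists>!h. hom C T P h \<and> Comp C p1 h = a \<and> Comp C p2 h = b"
    using assms unfolding is_pullback_def by blast
  moreover have "Dom C a = T" using assms(2) by (simp add: hom_def)
  ultimately show "hom C T P (pbpair C P p1 p2 a b)" "Comp C p1 (pbpair C P p1 p2 a b) = a"
    "Comp C p2 (pbpair C P p1 p2 a b) = b"
    unfolding pbpair_def by (auto dest!: theI')
qed

lemma
  assumes "is_A3 C qx qy L l1 l2 l3"
    and "hom C T (Dom C qx) a" "hom C T (Dom C qx) b" "hom C T (Dom C qx) c"
    and "Comp C qx a = Comp C qx b" "Comp C qy b = Comp C qy c"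
  shows triple_hom: "hom C T L (triple C L l1 l2 l3 a b c)"
    and triple_proj1: "Comp C l1 (triple C L l1 l2 l3 a b c) = a"
    and triple_proj2: "Comp C l2 (triple C L l1 l2 l3 a b c) = b"
    and triple_proj3: "Comp C l3 (triple C L l1 l2 l3 a b c) = c"
proof -
  have "\<exists>!h. hom C T L h \<and> Comp C l1 h = a \<and> Comp C l2 h = b \<and> Comp C l3 h = c"
    using assms unfolding is_A3_def by blast
  moreover have "Dom C a = T" using assms(2) by (simp add: hom_def)
  ultimately show "hom C T L (triple C L l1 l2 l3 a b c)" "Comp C l1 (triple C L l1 l2 l3 a b c) = a"
    "Comp C l2 (triple C L l1 l2 l3 a b c) = b" "Comp C l3 (triple C L l1 l2 l3 a b c) = c"
    unfolding triple_def by (auto dest!: theI')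
qed

lemma triple_unique:
  assumes "is_A3 C qx qy L l1 l2 l3"
    and "hom C T (Dom C qx) a" "hom C T (Dom C qx) b" "hom C T (Dom C qx) c"
    and "Comp C qx a = Comp C qx b" "Comp C qy b = Comp C qy c"
    and "hom C T L h" "Comp C l1 h = a" "Comp C l2 h = b" "Comp C l3 h = c"
  shows "triple C L l1 l2 l3 a b c = h"
proof -
  have "\<exists>!h. hom C T L h \<and> Comp C l1 h = a \<and> Comp C l2 h = b \<and> Comp C l3 h = c"
    using assms(1-6) unfolding is_A3_def by blast
  moreover have "Dom C a = T" using assms(2) by (simp add: hom_def)
  ultimately show ?thesis
    unfolding triple_def using assms(7-10) by (auto intro: the1_equality)
qed

locale category_axioms =
  fixes C :: "('o, 'm) cat"
  assumes category: "category C"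
begin

abbreviation comp :: "'m \<Rightarrow> 'm \<Rightarrow> 'm"  (infixr "\<cdot>" 55)
  where "g \<cdot> f \<equiv> Comp C g f"

lemma hom_objs: "hom C a b f \<Longrightarrow> a \<in> Obj C \<and> b \<in> Obj C"
  using category unfolding category_def hom_def by blast

lemma id_hom: "a \<in> Obj C \<Longrightarrow> hom C a a (Id C a)"
  using category unfolding category_def by blast

lemma comp_hom: "hom C a b f \<Longrightarrow> hom C b c g \<Longrightarrow> hom C a c (g \<cdot> f)"
  using category unfolding category_def hom_def by metis

lemma comp_assoc: "hom C a b f \<Longrightarrow> hom C b c g \<Longrightarrow> hom C c d h \<Longrightarrow> h \<cdot> g \<cdot> f = (h \<cdot> g) \<cdot> f"
  using category unfolding category_def hom_def by metis

lemma comp_id_left: "hom C a b f \<Longrightarrow> Id C b \<cdot> f = f"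
  using category unfolding category_def hom_def by metis

lemma comp_id_right: "hom C a b f \<Longrightarrow> f \<cdot> Id C a = f"
  using category unfolding category_def hom_def by metis

lemma comp_copair:
  assumes "is_coproduct C a b S i1 i2" "hom C a T f" "hom C b T g" "hom C T U h"
  shows "h \<cdot> copair C S i1 i2 f g = copair C S i1 i2 (h \<cdot> f) (h \<cdot> g)"
proof -
  have i: "hom C a S i1" "hom C b S i2" using assms(1) unfolding is_coproduct_def by auto
  have fg: "hom C S T (copair C S i1 i2 f g)" using assms(1-3) by (rule copair_hom)
  show ?thesis
  proof (rule copair_unique[OF assms(1), symmetric])
    show "hom C a U (h \<cdot> f)" "hom C b U (h \<cdot> g)" "hom C S U (h \<cdot> copair C S i1 i2 f g)"
      using assms fg comp_hom by blast+
    show "(h \<cdot> copair C S i1 i2 f g) \<cdot> i1 = h \<cdot> f" "(h \<cdot> copair C S i1 i2 f g) \<cdot> i2 = h \<cdot> g"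
      using comp_assoc[OF i(1) fg assms(4)] comp_assoc[OF i(2) fg assms(4)]
        copair_in1[OF assms(1-3)] copair_in2[OF assms(1-3)] by simp_all
  qed
qed

lemma triple_comp:
  assumes "is_A3 C qx qy L l1 l2 l3"
    and "hom C T (Dom C qx) a" "hom C T (Dom C qx) b" "hom C T (Dom C qx) c"
    and "qx \<cdot> a = qx \<cdot> b" "qy \<cdot> b = qy \<cdot> c" "hom C U T h"
  shows "triple C L l1 l2 l3 a b c \<cdot> h = triple C L l1 l2 l3 (a \<cdot> h) (b \<cdot> h) (c \<cdot> h)"
proof -
  let ?t = "triple C L l1 l2 l3 a b c"
  have l: "hom C L (Dom C qx) l1" "hom C L (Dom C qx) l2" "hom C L (Dom C qx) l3"
    and q: "hom C (Dom C qx) (Cod C qx) qx" "hom C (Dom C qy) (Cod C qy) qy" "Dom C qy = Dom C qx"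
    using assms(1) unfolding is_A3_def hom_def by auto
  have t: "hom C T L ?t" "l1 \<cdot> ?t = a" "l2 \<cdot> ?t = b" "l3 \<cdot> ?t = c"
    using assms(1-6) by (rule triple_hom triple_proj1 triple_proj2 triple_proj3)+
  show ?thesis
  proof (rule triple_unique[OF assms(1), symmetric])
    show "hom C U (Dom C qx) (a \<cdot> h)" "hom C U (Dom C qx) (b \<cdot> h)" "hom C U (Dom C qx) (c \<cdot> h)"
      using assms(2-4,7) comp_hom by blast+
    show "qx \<cdot> a \<cdot> h = qx \<cdot> b \<cdot> h" "qy \<cdot> b \<cdot> h = qy \<cdot> c \<cdot> h"
      using comp_assoc[OF assms(7) assms(2) q(1)] comp_assoc[OF assms(7) assms(3) q(1)]
        comp_assoc[OF assms(7) assms(3) q(2)[unfolded q(3)]]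
        comp_assoc[OF assms(7) assms(4) q(2)[unfolded q(3)]] assms(5,6) by simp_all
    show "hom C U L (?t \<cdot> h)" using t(1) assms(7) comp_hom by blast
    show "l1 \<cdot> ?t \<cdot> h = a \<cdot> h" "l2 \<cdot> ?t \<cdot> h = b \<cdot> h" "l3 \<cdot> ?t \<cdot> h = c \<cdot> h"
      using comp_assoc[OF assms(7) t(1) l(1)] comp_assoc[OF assms(7) t(1) l(2)]
        comp_assoc[OF assms(7) t(1) l(3)] t(2-4) by simp_all
  qed
qed

lemma pregroupoid_cancel_left:
  assumes A3: "is_A3 C qx qy L l1 l2 l3" and KX: "is_pullback C qx qx KX k1 k2"
    and p: "pregroupoid_structure C L l1 l2 l3 k1 k2 r1 r2 p"
    and a: "hom C T (Dom C qx) a" and b: "hom C T (Dom C qx) b" and ab: "qx \<cdot> a = qx \<cdot> b"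
  shows "p \<cdot> triple C L l1 l2 l3 a b b = a"
proof -
  let ?h = "pbpair C KX k1 k2 a b"
  let ?k = "triple C L l1 l2 l3 k1 k2 k2"
  have h: "hom C T KX ?h" "k1 \<cdot> ?h = a" "k2 \<cdot> ?h = b"
    using KX a b ab by (rule pbpair_hom pbpair_proj1 pbpair_proj2)+
  have k: "hom C KX (Dom C qx) k1" "hom C KX (Dom C qx) k2" "qx \<cdot> k1 = qx \<cdot> k2"
    using KX unfolding is_pullback_def by auto
  have k_hom: "hom C KX L ?k" using A3 k by (intro triple_hom) auto
  have p_hom: "hom C L (Dom C qx) p"
    using p A3 unfolding pregroupoid_structure_def is_A3_def hom_def by auto
  have "?k \<cdot> ?h = triple C L l1 l2 l3 a b b"
    using triple_comp[OF A3 k(1,2,2) k(3) refl h(1)] h(2,3) by simp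
  then have "p \<cdot> triple C L l1 l2 l3 a b b = (p \<cdot> ?k) \<cdot> ?h"
    using comp_assoc[OF h(1) k_hom p_hom] by simp
  also have "\<dots> = a" using p h(2) unfolding pregroupoid_structure_def by simp
  finally show ?thesis .
qed

lemma pregroupoid_cancel_right:
  assumes A3: "is_A3 C qx qy L l1 l2 l3" and KY: "is_pullback C qy qy KY r1 r2"
    and p: "pregroupoid_structure C L l1 l2 l3 k1 k2 r1 r2 p"
    and b: "hom C T (Dom C qx) b" and c: "hom C T (Dom C qx) c" and bc: "qy \<cdot> b = qy \<cdot> c"
  shows "p \<cdot> triple C L l1 l2 l3 b b c = c"
proof -
  have dq: "Dom C qy = Dom C qx" using A3 unfolding is_A3_def by simp
  let ?h = "pbpair C KY r1 r2 b c"
  let ?k = "triple C L l1 l2 l3 r1 r1 r2"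
  have h: "hom C T KY ?h" "r1 \<cdot> ?h = b" "r2 \<cdot> ?h = c"
    using KY b c bc dq by (auto intro: pbpair_hom pbpair_proj1 pbpair_proj2)
  have r: "hom C KY (Dom C qx) r1" "hom C KY (Dom C qx) r2" "qy \<cdot> r1 = qy \<cdot> r2"
    using KY dq unfolding is_pullback_def by auto
  have k_hom: "hom C KY L ?k" using A3 r by (intro triple_hom) auto
  have p_hom: "hom C L (Dom C qx) p"
    using p A3 unfolding pregroupoid_structure_def is_A3_def hom_def by auto
  have "?k \<cdot> ?h = triple C L l1 l2 l3 b b c"
    using triple_comp[OF A3 r(1,1,2) refl r(3) h(1)] h(2,3) by simp
  then have "p \<cdot> triple C L l1 l2 l3 b b c = (p \<cdot> ?k) \<cdot> ?h"
    using comp_assoc[OF h(1) k_hom p_hom] by simp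
  also have "\<dots> = c" using p h(3) unfolding pregroupoid_structure_def by simp
  finally show ?thesis .
qed

end

locale pointed_category = category_axioms +
  assumes pointed: "pointed C"
begin

abbreviation zero_object
  where "zero_object \<equiv> SOME z. is_zero_obj C z"

lemma
  assumes "a \<in> Obj C"
  shows to_zero_object_unique: "\<exists>!f. hom C a zero_object f"
    and from_zero_object_unique: "\<exists>!g. hom C zero_object a g"
proof -
  have "is_zero_obj C zero_object"
    using pointed unfolding pointed_def by (rule someI_ex)
  then show "\<exists>!f. hom C a zero_object f" "\<exists>!g. hom C zero_object a g"
    using assms unfolding is_zero_obj_def is_initial_def is_terminal_def by blast+
qed

lemma zero_arr_factors:
  "zero_arr C a b = (THE g. hom C zero_object b g) \<cdot> (THE f. hom C a zero_object f)"
  unfolding zero_arr_def Let_def ..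

lemma zero_arr_hom: "a \<in> Obj C \<Longrightarrow> b \<in> Obj C \<Longrightarrow> hom C a b (zero_arr C a b)"
  unfolding zero_arr_factors
  by (rule comp_hom) (rule theI', rule to_zero_object_unique from_zero_object_unique, assumption)+

lemma comp_zero_arr:
  assumes "a \<in> Obj C" "hom C b c h"
  shows "h \<cdot> zero_arr C a b = zero_arr C a c"
proof -
  have bc: "b \<in> Obj C" "c \<in> Obj C" using hom_objs[OF assms(2)] by auto
  have f: "hom C a zero_object (THE f. hom C a zero_object f)"
    and g: "hom C zero_object b (THE g. hom C zero_object b g)"
    using theI'[OF to_zero_object_unique[OF assms(1)]] theI'[OF from_zero_object_unique[OF bc(1)]] .
  have "h \<cdot> (THE g. hom C zero_object b g) = (THE g. hom C zero_object c g)"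
    using the1_equality[OF from_zero_object_unique[OF bc(2)] comp_hom[OF g assms(2)]] by simp
  then show ?thesis unfolding zero_arr_factors using comp_assoc[OF f g assms(2)] by simp
qed

lemma comp_copair_id_zero:
  assumes "is_coproduct C W X S i1 i2" "hom C W A w"
  shows "w \<cdot> copair C S i1 i2 (Id C W) (zero_arr C X W) = copair C S i1 i2 w (zero_arr C X A)"
proof -
  have X: "X \<in> Obj C" and W: "W \<in> Obj C"
    using assms unfolding is_coproduct_def by (auto dest: hom_objs)
  show ?thesis
    using comp_copair[OF assms(1) id_hom[OF W] zero_arr_hom[OF X W] assms(2)]
      comp_id_right[OF assms(2)] comp_zero_arr[OF X assms(2)] by simp
qed

lemma cokernel_comp_copair:
  assumes "is_coproduct C W X S i1 i2" "hom C W A w" "hom C X A x" "is_cokernel C x Q q"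
  shows "q \<cdot> copair C S i1 i2 w x = q \<cdot> copair C S i1 i2 w (zero_arr C X A)"
proof -
  have q: "hom C A Q q" "q \<cdot> x = zero_arr C X Q" "Q \<in> Obj C"
    using assms(3,4) unfolding is_cokernel_def hom_def by auto
  have X: "X \<in> Obj C" and A: "A \<in> Obj C" using hom_objs[OF assms(3)] by auto
  show ?thesis
    using comp_copair[OF assms(1,2,3) q(1)] comp_copair[OF assms(1,2) zero_arr_hom[OF X A] q(1)]
      comp_zero_arr[OF X q(1)] q(2) by simp
qed

end

locale pregroupoid_on_cokernels = pointed_category +
  fixes W A w X x Y y SX i1 i2 SY j1 j2 P pi1 pi2 QX qx QY qy L l1 l2 l3 KX k1 k2 KY r1 r2 p
  assumes w: "hom C W A w" and x: "hom C X A x" and y: "hom C Y A y"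
    and coproduct_X: "is_coproduct C W X SX i1 i2" and coproduct_Y: "is_coproduct C W Y SY j1 j2"
    and pullback: "is_pullback C (copair C SX i1 i2 (Id C W) (zero_arr C X W))
                     (copair C SY j1 j2 (Id C W) (zero_arr C Y W)) P pi1 pi2"
    and cokernel_x: "is_cokernel C x QX qx" and cokernel_y: "is_cokernel C y QY qy"
    and A3: "is_A3 C qx qy L l1 l2 l3"
    and kernel_pair_x: "is_pullback C qx qx KX k1 k2"
    and kernel_pair_y: "is_pullback C qy qy KY r1 r2"
    and pregroupoid: "pregroupoid_structure C L l1 l2 l3 k1 k2 r1 r2 p"
begin

abbreviation "retract_X \<equiv> copair C SX i1 i2 (Id C W) (zero_arr C X W)"
abbreviation "retract_Y \<equiv> copair C SY j1 j2 (Id C W) (zero_arr C Y W)"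
abbreviation "wx \<equiv> copair C SX i1 i2 w x"
abbreviation "wy \<equiv> copair C SY j1 j2 w y"
abbreviation "w0_X \<equiv> copair C SX i1 i2 w (zero_arr C X A)"
abbreviation "w0_Y \<equiv> copair C SY j1 j2 w (zero_arr C Y A)"
abbreviation "unit_X \<equiv> pbpair C P pi1 pi2 (Id C SX) (j1 \<cdot> retract_X)"
abbreviation "unit_Y \<equiv> pbpair C P pi1 pi2 (i1 \<cdot> retract_Y) (Id C SY)"
abbreviation "gamma_w \<equiv> gamma C w x y SX i1 i2 SY j1 j2 pi1 pi2 L l1 l2 l3"

lemma doms [simp]: "Dom C w = W" "Cod C w = A" "Dom C x = X" "Dom C y = Y" "Dom C qx = A" "Dom C qy = A"
  using w x y cokernel_x cokernel_y unfolding is_cokernel_def hom_def by auto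

lemma objs: "W \<in> Obj C" "A \<in> Obj C" "X \<in> Obj C" "Y \<in> Obj C"
  using hom_objs w x y by blast+

lemma injections: "hom C W SX i1" "hom C X SX i2" "hom C W SY j1" "hom C Y SY j2"
  using coproduct_X coproduct_Y unfolding is_coproduct_def by auto

lemma retract_hom: "hom C SX W retract_X" "hom C SY W retract_Y"
  using coproduct_X coproduct_Y objs by (auto intro: copair_hom id_hom zero_arr_hom)

lemma retract_in1: "retract_X \<cdot> i1 = Id C W" "retract_Y \<cdot> j1 = Id C W"
  using coproduct_X coproduct_Y objs by (auto intro: copair_in1 id_hom zero_arr_hom)

lemma copairs_hom: "hom C SX A wx" "hom C SX A w0_X" "hom C SY A wy" "hom C SY A w0_Y"
  using coproduct_X coproduct_Y w x y objs by (auto intro: copair_hom zero_arr_hom)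

lemma pullback_proj: "hom C P SX pi1" "hom C P SY pi2" "retract_X \<cdot> pi1 = retract_Y \<cdot> pi2"
  using pullback retract_hom unfolding is_pullback_def hom_def by auto

lemma retract_dom: "Dom C retract_X = SX" "Dom C retract_Y = SY"
  using retract_hom unfolding hom_def by auto

lemma cokernel_hom: "hom C A QX qx" "hom C A QY qy"
  using cokernel_x cokernel_y x y unfolding is_cokernel_def hom_def by auto

lemma p_hom: "hom C L A p"
  using pregroupoid A3 unfolding pregroupoid_structure_def is_A3_def hom_def by auto

lemma w0_X_pi1: "w0_X \<cdot> pi1 = w0_Y \<cdot> pi2"
  using comp_copair_id_zero[OF coproduct_X w] comp_copair_id_zero[OF coproduct_Y w]
    comp_assoc[OF pullback_proj(1) retract_hom(1) w] comp_assoc[OF pullback_proj(2) retract_hom(2) w]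
    pullback_proj(3) by simp

lemma gamma_w_eq: "gamma_w = triple C L l1 l2 l3 (wx \<cdot> pi1) (w0_X \<cdot> pi1) (wy \<cdot> pi2)"
  unfolding gamma_def by simp

lemma gamma_w_conditions:
  "qx \<cdot> wx \<cdot> pi1 = qx \<cdot> w0_X \<cdot> pi1" "qy \<cdot> w0_X \<cdot> pi1 = qy \<cdot> wy \<cdot> pi2"
proof -
  show "qx \<cdot> wx \<cdot> pi1 = qx \<cdot> w0_X \<cdot> pi1"
    using comp_assoc[OF pullback_proj(1) copairs_hom(1) cokernel_hom(1)]
      comp_assoc[OF pullback_proj(1) copairs_hom(2) cokernel_hom(1)]
      cokernel_comp_copair[OF coproduct_X w x cokernel_x] by simp
  show "qy \<cdot> w0_X \<cdot> pi1 = qy \<cdot> wy \<cdot> pi2"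
    using comp_assoc[OF pullback_proj(2) copairs_hom(4) cokernel_hom(2)]
      comp_assoc[OF pullback_proj(2) copairs_hom(3) cokernel_hom(2)]
      cokernel_comp_copair[OF coproduct_Y w y cokernel_y] w0_X_pi1 by simp
qed

lemma gamma_w_legs: "hom C P A (wx \<cdot> pi1)" "hom C P A (w0_X \<cdot> pi1)" "hom C P A (wy \<cdot> pi2)"
  using pullback_proj copairs_hom by (auto intro: comp_hom)

lemma gamma_w_hom: "hom C P L gamma_w"
  unfolding gamma_w_eq
  using triple_hom[OF A3, unfolded doms, OF gamma_w_legs gamma_w_conditions] .

lemma gamma_w_comp:
  assumes "hom C U P h"
  shows "gamma_w \<cdot> h = triple C L l1 l2 l3 (wx \<cdot> pi1 \<cdot> h) (w0_X \<cdot> pi1 \<cdot> h) (wy \<cdot> pi2 \<cdot> h)"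
  unfolding gamma_w_eq
  using triple_comp[OF A3, unfolded doms, OF gamma_w_legs gamma_w_conditions assms]
    comp_assoc[OF assms pullback_proj(1) copairs_hom(1)]
    comp_assoc[OF assms pullback_proj(1) copairs_hom(2)]
    comp_assoc[OF assms pullback_proj(2) copairs_hom(3)] by simp

lemma unit_X: "hom C SX P unit_X" "pi1 \<cdot> unit_X = Id C SX" "pi2 \<cdot> unit_X = j1 \<cdot> retract_X"
proof -
  have ids: "hom C SX SX (Id C SX)" and j1_retract: "hom C SX SY (j1 \<cdot> retract_X)"
    using retract_hom injections by (auto intro: id_hom comp_hom dest: hom_objs)
  have "retract_X \<cdot> Id C SX = retract_Y \<cdot> j1 \<cdot> retract_X"
    using comp_assoc[OF retract_hom(1) injections(3) retract_hom(2)] retract_in1(2)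
      comp_id_left[OF retract_hom(1)] comp_id_right[OF retract_hom(1)] by simp
  then show "hom C SX P unit_X" "pi1 \<cdot> unit_X = Id C SX" "pi2 \<cdot> unit_X = j1 \<cdot> retract_X"
    using pbpair_hom[OF pullback] pbpair_proj1[OF pullback] pbpair_proj2[OF pullback]
      ids j1_retract retract_dom by simp_all
qed

lemma unit_Y: "hom C SY P unit_Y" "pi1 \<cdot> unit_Y = i1 \<cdot> retract_Y" "pi2 \<cdot> unit_Y = Id C SY"
proof -
  have ids: "hom C SY SY (Id C SY)" and i1_retract: "hom C SY SX (i1 \<cdot> retract_Y)"
    using retract_hom injections by (auto intro: id_hom comp_hom dest: hom_objs)
  have "retract_X \<cdot> i1 \<cdot> retract_Y = retract_Y \<cdot> Id C SY"
    using comp_assoc[OF retract_hom(2) injections(1) retract_hom(1)] retract_in1(1)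
      comp_id_left[OF retract_hom(2)] comp_id_right[OF retract_hom(2)] by simp
  then show "hom C SY P unit_Y" "pi1 \<cdot> unit_Y = i1 \<cdot> retract_Y" "pi2 \<cdot> unit_Y = Id C SY"
    using pbpair_hom[OF pullback] pbpair_proj1[OF pullback] pbpair_proj2[OF pullback]
      ids i1_retract retract_dom by simp_all
qed

lemma gamma_w_unit_X: "gamma_w \<cdot> unit_X = triple C L l1 l2 l3 wx w0_X w0_X"
proof -
  have "wy \<cdot> j1 \<cdot> retract_X = w0_X"
    using comp_assoc[OF retract_hom(1) injections(3) copairs_hom(3)] copair_in1[OF coproduct_Y w y]
      comp_copair_id_zero[OF coproduct_X w] by simp
  then show ?thesis
    using gamma_w_comp[OF unit_X(1)] unit_X(2,3)
      comp_id_right[OF copairs_hom(1)] comp_id_right[OF copairs_hom(2)] by simp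
qed

lemma gamma_w_unit_Y: "gamma_w \<cdot> unit_Y = triple C L l1 l2 l3 w0_Y w0_Y wy"
proof -
  have "wx \<cdot> i1 \<cdot> retract_Y = w0_Y" "w0_X \<cdot> i1 \<cdot> retract_Y = w0_Y"
    using comp_assoc[OF retract_hom(2) injections(1) copairs_hom(1)]
      comp_assoc[OF retract_hom(2) injections(1) copairs_hom(2)]
      copair_in1[OF coproduct_X w x] copair_in1[OF coproduct_X w zero_arr_hom[OF objs(3,2)]]
      comp_copair_id_zero[OF coproduct_Y w] by simp_all
  then show ?thesis
    using gamma_w_comp[OF unit_Y(1)] unit_Y(2,3) comp_id_right[OF copairs_hom(3)] by simp
qed

lemma multiplication_unit_X: "(p \<cdot> gamma_w) \<cdot> unit_X = wx"
  using comp_assoc[OF unit_X(1) gamma_w_hom p_hom] gamma_w_unit_X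
    pregroupoid_cancel_left[OF A3 kernel_pair_x pregroupoid, unfolded doms]
    copairs_hom(1,2) cokernel_comp_copair[OF coproduct_X w x cokernel_x] by simp

lemma multiplication_unit_Y: "(p \<cdot> gamma_w) \<cdot> unit_Y = wy"
  using comp_assoc[OF unit_Y(1) gamma_w_hom p_hom] gamma_w_unit_Y
    pregroupoid_cancel_right[OF A3 kernel_pair_y pregroupoid, unfolded doms]
    copairs_hom(3,4) cokernel_comp_copair[OF coproduct_Y w y cokernel_y] by simp

end

theorem theorem1p3:
  fixes C :: "('o, 'm) cat"
  assumes "category C" and "pointed C"
    and "has_finite_limits C" and "has_finite_colimits C"
    and "hom C W A w" and "hom C X A x" and "hom C Y A y"
    and "is_coproduct C W X SX i1 i2" and "is_coproduct C W Y SY j1 j2"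
    and "is_pullback C (copair C SX i1 i2 (Id C W) (zero_arr C X W))
                       (copair C SY j1 j2 (Id C W) (zero_arr C Y W)) P pi1 pi2"
    and "is_cokernel C x QX qx" and "is_cokernel C y QY qy"
    and "is_A3 C qx qy L l1 l2 l3"
    and "is_pullback C qx qx KX k1 k2" and "is_pullback C qy qy KY r1 r2"
    and "pregroupoid_structure C L l1 l2 l3 k1 k2 r1 r2 p"
  shows "internal_mult C w x y SX i1 i2 SY j1 j2 P pi1 pi2
           (Comp C p (gamma C w x y SX i1 i2 SY j1 j2 pi1 pi2 L l1 l2 l3))"
proof -
  interpret pregroupoid_on_cokernels C W A w X x Y y SX i1 i2 SY j1 j2 P pi1 pi2
      QX qx QY qy L l1 l2 l3 KX k1 k2 KY r1 r2 p
    by unfold_locales (fact assms)+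
  show ?thesis
    unfolding internal_mult_def
    using comp_hom[OF gamma_w_hom p_hom] multiplication_unit_X multiplication_unit_Y by simp
qed

end
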